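(* Let $\Omega=\{(U,V)\in\mathbb R^2:a<UV<b\}$ with $-\infty\le a<0<b\le\infty$, let $g,w:(a,b)\to\mathbb R$ be smooth functions, $e\neq0$ a constant, and $\tau^1,\tau^2,\tau^3$ the Pauli matrices. On $\mathcal M=\Omega\times S^2$, with $\vec n\in S^2\subset\mathbb R^3$ the unit vector, define the $\mathfrak{su}(2)$-valued $1$-form $$A^{(0)}=\frac{1}{2e}\Big[(\vec n\cdot\vec\tau)\,g(UV)\,(V\,dU-U\,dV)+(w(UV)-1)\,\epsilon_{ijk}\tau^i n^j\,dn^k\Big].$$ Let $J:\mathcal M\to\mathcal M$, $J(U,V,\vec n)=(V,U,-\vec n)$. Then $J^*A^{(0)}=A^{(0)}$. Consequently, for the four-dimensional spherically symmetric Einstein–$\mathrm{SU}(2)$ black hole written in this gauge with metric $-f(UV)\,dU\,dV+r(UV)^2d\Omega^2$, the quotient by $\{\mathrm{Id},J\}$ is a solution (a geon) with trivial gauge bundle.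
   Context: $d\Omega^2$ is the round unit-sphere metric; $J$ is a free involutive isometry of $-f(UV)\,dU\,dV+r(UV)^2d\Omega^2$ for any smooth positive $f,r$. The form $A^{(0)}$ is the gauge potential of the spherically symmetric Einstein–$\mathrm{SU}(2)$ black hole (Bjoraker–Hosotani notation) transformed to a gauge regular at the horizon and written in Kruskal coordinates. *)

theory Defs
  imports "HOL-Analysis.Analysis" "HOL-Library.Extended_Real"
begin

type_synonym pt = "real \<times> real \<times> (real^3)"

definition Omega :: "ereal \<Rightarrow> ereal \<Rightarrow> (real \<times> real) set" where
  "Omega a b = {(U, V). a < ereal (U * V) \<and> ereal (U * V) < b}"

definition Mspace :: "ereal \<Rightarrow> ereal \<Rightarrow> pt set" where
  "Mspace a b = {(U, V, n). (U, V) \<in> Omega a b \<and> norm n = 1}"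

definition tangent :: "pt \<Rightarrow> pt set" where
  "tangent p = {(dU, dV, dn). dn \<bullet> snd (snd p) = 0}"

definition smooth_on :: "(real \<Rightarrow> real) \<Rightarrow> real set \<Rightarrow> bool" where
  "smooth_on f S = (\<forall>k. \<forall>x\<in>S. ((deriv ^^ k) f) differentiable (at x))"

definition ointerval :: "ereal \<Rightarrow> ereal \<Rightarrow> real set" where
  "ointerval a b = {x. a < ereal x \<and> ereal x < b}"

text \<open>Pauli matrices tau^1, tau^2, tau^3 (indices of type 3: 1, 2, 3).\<close>
definition pauli :: "3 \<Rightarrow> complex^2^2" where
  "pauli i = (if i = 1 then vector [vector [0, 1], vector [1, 0]]
              else if i = 2 then vector [vector [0, - \<i>], vector [\<i>, 0]]
              else vector [vector [1, 0], vector [0, -1]])"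

definition levi :: "3 \<Rightarrow> 3 \<Rightarrow> 3 \<Rightarrow> real" where
  "levi i j k =
     (if (i, j, k) \<in> {(1, 2, 3), (2, 3, 1), (3, 1, 2)} then 1
      else if (i, j, k) \<in> {(1, 3, 2), (3, 2, 1), (2, 1, 3)} then -1 else 0)"

definition A0 :: "real \<Rightarrow> (real \<Rightarrow> real) \<Rightarrow> (real \<Rightarrow> real) \<Rightarrow> pt \<Rightarrow> pt \<Rightarrow> complex^2^2" where
  "A0 e g w p v = (case p of (U, V, n) \<Rightarrow> case v of (dU, dV, dn) \<Rightarrow>
     (1 / (2 * e)) *\<^sub>R
       ((g (U * V) * (V * dU - U * dV)) *\<^sub>R (\<Sum>i\<in>UNIV. (n $ i) *\<^sub>R pauli i)
        + (w (U * V) - 1) *\<^sub>R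
            (\<Sum>i\<in>UNIV. \<Sum>j\<in>UNIV. \<Sum>k\<in>UNIV. (levi i j k * n $ j * dn $ k) *\<^sub>R pauli i)))"

definition pullback :: "(pt \<Rightarrow> pt) \<Rightarrow> (pt \<Rightarrow> pt \<Rightarrow> 'b) \<Rightarrow> pt \<Rightarrow> pt \<Rightarrow> 'b" where
  "pullback \<Phi> \<alpha> p v = \<alpha> (\<Phi> p) (frechet_derivative \<Phi> (at p) v)"

definition Jmap :: "pt \<Rightarrow> pt" where
  "Jmap p = (case p of (U, V, n) \<Rightarrow> (V, U, - n))"

end

theory Submission
  imports Defs
begin

text \<open>J is linear, so it is its own derivative and the pullback of A0 at p on v is
  A0 evaluated at (J p, J v). Under J both n and V dU - U dV change sign, so the
  monopole term (n.tau) g(UV) (V dU - U dV) is invariant, while the term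
  eps_ijk tau^i n^j dn^k is invariant because it is bilinear in (n, dn).\<close>

lemma pullback_bounded_linear:
  assumes "bounded_linear L"
  shows "pullback L \<alpha> p v = \<alpha> (L p) (L v)"
  using frechet_derivative_at[OF bounded_linear_imp_has_derivative[OF assms]]
  by (simp add: pullback_def)

lemma bounded_linear_Jmap: "bounded_linear Jmap"
proof -
  have "((\<lambda>p::pt. (fst (snd p), fst p, - snd (snd p))) has_derivative
        (\<lambda>p. (fst (snd p), fst p, - snd (snd p)))) (at 0)"
    by (intro derivative_eq_intros) auto
  moreover have "Jmap = (\<lambda>p. (fst (snd p), fst p, - snd (snd p)))"
    by (auto simp: Jmap_def fun_eq_iff split: prod.splits)
  ultimately show ?thesis
    using has_derivative_bounded_linear by metis
qed

lemma Jmap_Mspace: "Jmap ` Mspace a b \<subseteq> Mspace a b"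
  by (auto simp: Jmap_def Mspace_def Omega_def mult.commute)

lemma A0_Jmap: "A0 e g w (Jmap p) (Jmap v) = A0 e g w p v"
proof -
  obtain U V n where p: "p = (U, V, n)"
    by (cases p) auto
  obtain dU dV dn where v: "v = (dU, dV, dn)"
    by (cases v) auto
  have monopole_odd: "g (U * V) * (U * dV - V * dU) = - (g (U * V) * (V * dU - U * dV))"
    by (simp add: algebra_simps)
  have n_tau_odd: "(\<Sum>i\<in>UNIV. ((- n) $ i) *\<^sub>R pauli i) = - (\<Sum>i\<in>UNIV. (n $ i) *\<^sub>R pauli i)"
    by (simp add: sum_negf)
  show ?thesis
    unfolding p v Jmap_def A0_def prod.case mult.commute[of V U] monopole_odd n_tau_odd
    by simp
qed

text \<open>The invariance is a pointwise algebraic identity.\<close>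

theorem mainTheorem7:
  fixes a b :: ereal and e :: real and g w :: "real \<Rightarrow> real"
  assumes "a < 0" and "0 < b" and "e \<noteq> 0"
    and "smooth_on g (ointerval a b)" and "smooth_on w (ointerval a b)"
  shows "Jmap ` Mspace a b \<subseteq> Mspace a b \<and>
    (\<forall>p\<in>Mspace a b. \<forall>v\<in>tangent p.
       pullback Jmap (A0 e g w) p v = A0 e g w p v)"
  using Jmap_Mspace by (simp add: pullback_bounded_linear[OF bounded_linear_Jmap] A0_Jmap)

end
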